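(* Consider the multi-hop multi-channel network and Algorithm 1 described in the context, with parameter $\Delta_{est} \ge \Delta$, and assume $\delta \le \frac{1}{7}$. Let $v$ and $u$ be neighbors, let $f$ be a frame of $v$ and $g$ a frame of $u$ such that the pair $(f,g)$ is aligned. Then the probability that $(f,g)$ covers the link $v \to u$ is at least $\frac{\rho}{8\max(2S,\,3\Delta_{est})}$.
   Context: Network: a finite set of $N$ nodes; each node $u$ has a nonempty available channel set $A_u$; $S=\max_u |A_u|$. Neighborhood on a channel is a symmetric relation; all channels have identical propagation characteristics, so nodes $u,v$ are neighbors on a channel $c$ iff they are neighbors on some channel and $c\in A_u\cap A_v$. For $c\in A_u$, $\deg(u,c)$ is the number of neighbors of $u$ on $c$, and $\Delta=\max_u\max_{c\in A_u}\deg(u,c)$. For neighbors $v,u$ the link $v\to u$ has span $\mathrm{span}(v\to u)=A_u\cap A_v$ and span-ratio $|\mathrm{span}(v\to u)|/|A_u|$; $\rho$ is the minimum span-ratio over all links. A node operates on one channel at a time and cannot transmit and receive simultaneously; a node $u$ listening on channel $c$ throughout a real-time interval $I$ receives a message transmitted on $c$ during $I$ by a neighbor $v$ provided no other neighbor of $u$ on $c$ transmits on $c$ at any time during $I$; there is no collision detection. Clocks: each node $u$ has a clock $C_u$ with $(1-\delta)\Delta t \le C_u(t+\Delta t)-C_u(t)\le(1+\delta)\Delta t$ for all real $t$ and $\Delta t\ge 0$, arbitrary offsets. Algorithm 1 (input: a positive integer $\Delta_{est}$, an upper bound on $\Delta$ known to all nodes): each node starts at an arbitrary real time and partitions its local time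 into consecutive frames of local length $L$, each divided into three consecutive slots of local length $L/3$. At the start of each frame, node $u$ selects a channel $c$ uniformly at random from $A_u$, and with probability $p_u=\min\!\left(\frac12,\frac{|A_u|}{3\Delta_{est}}\right)$ is in transmit mode for that frame, otherwise in receive mode. In transmit mode it transmits on $c$, during each of the three slots of the frame, a message containing its identity and $A_u$; in receive mode it listens on $c$ during the whole frame, and for each message received from a node $v$ containing set $A$ it records $v$ as a neighbor with common channels $A\cap A_u$. All random choices are independent across frames and nodes. Definitions: a pair of frames $(f,g)$ (with $f$ a frame of $v$, $g$ a frame of $u$) is aligned if at least one slot of $f$ lies completely (in real time) within $g$. For a frame $g$ and node $w$, $\mathrm{overlap}(g,w)$ is the set of frames of $w$ overlapping $g$ in real time. The pair $(f,g)$ covers link $v\to u$ on channel $c$ if (i) $v$ transmits on $c$ during $f$, (ii) $u$ listens on $c$ during $g$, and (iii) no neighbor $w\neq v$ of $u$ on $c$ transmits on $c$ during any frame in $\mathrm{overlap}(g,w)$. The pair covers $v\to u$ if it covers it on some channel $c\in\mathrm{span}(v\to u)$. *)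

theory Defs
  imports "HOL-Probability.Probability"
begin

text \<open>Nodes form a finite type; nb is the (symmetric, irreflexive) neighbour relation
  and A u the available channel set of node u.\<close>

definition nb_on :: "('n \<Rightarrow> 'n \<Rightarrow> bool) \<Rightarrow> ('n \<Rightarrow> 'c set) \<Rightarrow> 'n \<Rightarrow> 'n \<Rightarrow> 'c \<Rightarrow> bool" where
  "nb_on nb A u w c \<longleftrightarrow> nb u w \<and> c \<in> A u \<and> c \<in> A w"

definition deg :: "('n \<Rightarrow> 'n \<Rightarrow> bool) \<Rightarrow> ('n \<Rightarrow> 'c set) \<Rightarrow> 'n \<Rightarrow> 'c \<Rightarrow> nat" where
  "deg nb A u c = card {w. nb_on nb A u w c}"

definition maxdeg :: "('n \<Rightarrow> 'n \<Rightarrow> bool) \<Rightarrow> ('n \<Rightarrow> 'c set) \<Rightarrow> nat" where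
  "maxdeg nb A = Max {deg nb A u c | u c. c \<in> A u}"

definition S_max :: "('n \<Rightarrow> 'c set) \<Rightarrow> nat" where
  "S_max A = Max (range (\<lambda>u. card (A u)))"

definition span_ratio :: "('n \<Rightarrow> 'c set) \<Rightarrow> 'n \<Rightarrow> 'n \<Rightarrow> real" where
  "span_ratio A v u = real (card (A u \<inter> A v)) / real (card (A u))"

definition rho :: "('n \<Rightarrow> 'n \<Rightarrow> bool) \<Rightarrow> ('n \<Rightarrow> 'c set) \<Rightarrow> real" where
  "rho nb A = Min {span_ratio A v u | v u. nb v u}"

definition valid_clock :: "real \<Rightarrow> (real \<Rightarrow> real) \<Rightarrow> bool" where
  "valid_clock \<delta> Cl \<longleftrightarrow> (\<forall>t dt. dt \<ge> 0 \<longrightarrow>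
       (1 - \<delta>) * dt \<le> Cl (t + dt) - Cl t \<and> Cl (t + dt) - Cl t \<le> (1 + \<delta>) * dt)"

text \<open>Node w starts at real time s w; its k-th frame
  (k = 0,1,...) covers local times [C w (s w) + k L, C w (s w) + (k+1) L); slot j (j<3)
  of that frame covers local times [C w (s w) + k L + j L/3, C w (s w) + k L + (j+1) L/3).\<close>

definition frame_time :: "('n \<Rightarrow> real \<Rightarrow> real) \<Rightarrow> ('n \<Rightarrow> real) \<Rightarrow> real \<Rightarrow> 'n \<Rightarrow> nat \<Rightarrow> real set" where
  "frame_time C s L w k =
     {t. C w (s w) + real k * L \<le> C w t \<and> C w t < C w (s w) + real (Suc k) * L}"

definition slot_time :: "('n \<Rightarrow> real \<Rightarrow> real) \<Rightarrow> ('n \<Rightarrow> real) \<Rightarrow> real \<Rightarrow> 'n \<Rightarrow> nat \<Rightarrow> nat \<Rightarrow> real set" where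
  "slot_time C s L w k j =
     {t. C w (s w) + real k * L + real j * L / 3 \<le> C w t \<and>
         C w t < C w (s w) + real k * L + real (Suc j) * L / 3}"

definition aligned :: "('n \<Rightarrow> real \<Rightarrow> real) \<Rightarrow> ('n \<Rightarrow> real) \<Rightarrow> real \<Rightarrow> 'n \<Rightarrow> nat \<Rightarrow> 'n \<Rightarrow> nat \<Rightarrow> bool" where
  "aligned C s L v f u g \<longleftrightarrow> (\<exists>j<3. slot_time C s L v f j \<subseteq> frame_time C s L u g)"

definition overlap :: "('n \<Rightarrow> real \<Rightarrow> real) \<Rightarrow> ('n \<Rightarrow> real) \<Rightarrow> real \<Rightarrow> 'n \<Rightarrow> nat \<Rightarrow> 'n \<Rightarrow> nat set" where
  "overlap C s L u g w = {k. frame_time C s L w k \<inter> frame_time C s L u g \<noteq> {}}"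

definition p_tx :: "('n \<Rightarrow> 'c set) \<Rightarrow> nat \<Rightarrow> 'n \<Rightarrow> real" where
  "p_tx A Dest w = min (1/2) (real (card (A w)) / (3 * real Dest))"

definition frame_pmf :: "('n \<Rightarrow> 'c set) \<Rightarrow> nat \<Rightarrow> 'n \<Rightarrow> (bool \<times> 'c) pmf" where
  "frame_pmf A Dest w = pair_pmf (bernoulli_pmf (p_tx A Dest w)) (pmf_of_set (A w))"

definition alg_space :: "('n \<Rightarrow> 'c set) \<Rightarrow> nat \<Rightarrow> (('n \<times> nat) \<Rightarrow> (bool \<times> 'c)) measure" where
  "alg_space A Dest = PiM UNIV (\<lambda>i. measure_pmf (frame_pmf A Dest (fst i)))"

text \<open>Coverage. omega (w,k) = (b, c): in frame k node w transmits on c if b, listens on c otherwise.\<close>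

definition covers_on ::
  "('n \<Rightarrow> 'n \<Rightarrow> bool) \<Rightarrow> ('n \<Rightarrow> 'c set) \<Rightarrow> ('n \<Rightarrow> real \<Rightarrow> real) \<Rightarrow> ('n \<Rightarrow> real) \<Rightarrow> real \<Rightarrow>
   (('n \<times> nat) \<Rightarrow> (bool \<times> 'c)) \<Rightarrow> 'n \<Rightarrow> nat \<Rightarrow> 'n \<Rightarrow> nat \<Rightarrow> 'c \<Rightarrow> bool" where
  "covers_on nb A C s L \<omega> v f u g c \<longleftrightarrow>
     \<omega> (v, f) = (True, c) \<and> \<omega> (u, g) = (False, c) \<and>
     (\<forall>w. w \<noteq> v \<and> nb_on nb A u w c \<longrightarrow>
        (\<forall>k \<in> overlap C s L u g w. \<omega> (w, k) \<noteq> (True, c)))"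

definition covers ::
  "('n \<Rightarrow> 'n \<Rightarrow> bool) \<Rightarrow> ('n \<Rightarrow> 'c set) \<Rightarrow> ('n \<Rightarrow> real \<Rightarrow> real) \<Rightarrow> ('n \<Rightarrow> real) \<Rightarrow> real \<Rightarrow>
   (('n \<times> nat) \<Rightarrow> (bool \<times> 'c)) \<Rightarrow> 'n \<Rightarrow> nat \<Rightarrow> 'n \<Rightarrow> nat \<Rightarrow> bool" where
  "covers nb A C s L \<omega> v f u g \<longleftrightarrow> (\<exists>c \<in> A u \<inter> A v. covers_on nb A C s L \<omega> v f u g c)"

end

theory Submission
  imports Defs
begin

text \<open>Fix a channel c in the span of v \<rightarrow> u. For drift \<delta> \<le> 1/3 the frame of u lasts less than two
  frame lengths on the clock of any other node w, so it meets at most three frames of w; hence at most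
  3(\<Delta>_est - 1) frames of other neighbours of u on c can interfere. The coverage event on c is a
  cylinder in the product space of the independent per-frame choices: v transmits on c
  (probability at least 1/max(2S, 3\<Delta>_est)), u listens on c (probability at least 1/(2|A u|)),
  and each interfering frame avoids transmitting on c (probability at least 1 - 1/(3\<Delta>_est) each,
  at least 1/4 in total). The events for different channels are disjoint, and summing over the
  |A u \<inter> A v| \<ge> \<rho> |A u| channels of the span gives the bound.\<close>

lemma exp_minus_one_le_power:
  assumes "n \<ge> 2"
  shows "exp (-1) \<le> (1 - 1 / real n) ^ (n - 1)"
proof -
  define m where "m = real n - 1"
  have m: "m \<ge> 1" using assms unfolding m_def by simp
  have "exp (- (1 / m)) \<le> 1 / (1 + 1 / m)"
    using exp_ge_add_one_self[of "1 / m"] m by (simp add: exp_minus field_simps)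
  also have "\<dots> = 1 - 1 / real n"
    using m unfolding m_def by (simp add: field_simps)
  finally have "exp (- (1 / m)) ^ (n - 1) \<le> (1 - 1 / real n) ^ (n - 1)"
    by (intro power_mono) auto
  moreover have "exp (- (1 / m)) ^ (n - 1) = exp (-1)"
    using m assms unfolding m_def by (simp add: exp_of_nat_mult[symmetric] of_nat_diff)
  ultimately show ?thesis by simp
qed

lemma quarter_le_power_one_minus_inverse:
  assumes "D > 0"
  shows "1 / 4 \<le> (1 - 1 / (3 * real D)) ^ (3 * (D - 1))"
proof -
  define q where "q = 1 - 1 / (3 * real D)"
  have q: "0 \<le> q" "q \<le> 1" using assms unfolding q_def by (auto simp: field_simps)
  have "(1::real) / 4 \<le> exp (-1)"
    using exp_le by (simp add: exp_minus field_simps)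
  also have "\<dots> \<le> q ^ (3 * D - 1)"
    using exp_minus_one_le_power[of "3 * D"] assms unfolding q_def by simp
  also have "\<dots> \<le> q ^ (3 * (D - 1))"
    by (rule power_decreasing) (use q in auto)
  finally show ?thesis unfolding q_def .
qed

lemma valid_clock_nonneg:
  assumes "valid_clock \<delta> Cl"
  shows "0 \<le> \<delta>"
  using assms[unfolded valid_clock_def, rule_format, of 1 0] by simp

lemma valid_clockD:
  assumes "valid_clock \<delta> Cl" "t \<le> t'"
  shows "(1 - \<delta>) * (t' - t) \<le> Cl t' - Cl t" "Cl t' - Cl t \<le> (1 + \<delta>) * (t' - t)"
  using assms(1)[unfolded valid_clock_def, rule_format, of "t' - t" t] assms(2) by auto

lemma overlap_le_two_apart:
  assumes cw: "valid_clock \<delta> (C w)" and cu: "valid_clock \<delta> (C u)"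
    and \<delta>: "\<delta> \<le> 1/3" and L: "L > 0"
    and k: "k \<in> overlap C s L u g w" and k': "k' \<in> overlap C s L u g w"
  shows "k' \<le> k + 2"
proof (rule ccontr)
  assume "\<not> k' \<le> k + 2"
  hence "real k + 3 \<le> real k'" by simp
  hence "(real k + 3) * L \<le> real k' * L" using L by (intro mult_right_mono) auto
  moreover obtain t where t: "t \<in> frame_time C s L w k" "t \<in> frame_time C s L u g"
    using k unfolding overlap_def by auto
  moreover obtain t' where t': "t' \<in> frame_time C s L w k'" "t' \<in> frame_time C s L u g"
    using k' unfolding overlap_def by auto
  ultimately have w_gap: "C w t' - C w t > 2 * L"
    unfolding frame_time_def by (auto simp: algebra_simps)
  have u_gap: "C u t' - C u t < L"
    using t(2) t'(2) unfolding frame_time_def by (auto simp: algebra_simps)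
  have \<delta>0: "0 \<le> \<delta>" using valid_clock_nonneg[OF cw] .
  show False
  proof (cases "t \<le> t'")
    case True
    have "2 * L * (1 - \<delta>) < (1 + \<delta>) * (t' - t) * (1 - \<delta>)"
      using valid_clockD(2)[OF cw True] w_gap \<delta> by (intro mult_strict_right_mono) auto
    also have "\<dots> = (1 + \<delta>) * ((1 - \<delta>) * (t' - t))" by simp
    also have "\<dots> \<le> (1 + \<delta>) * L"
      using valid_clockD(1)[OF cu True] u_gap \<delta>0 by (intro mult_left_mono) auto
    finally have "2 * L * (1 - \<delta>) < (1 + \<delta>) * L" .
    moreover have "0 \<le> L * (1 - 3 * \<delta>)" using \<delta> L by simp
    ultimately show False by (simp add: algebra_simps)
  next
    case False
    hence "(1 - \<delta>) * (t - t') \<le> C w t - C w t'" "0 \<le> (1 - \<delta>) * (t - t')"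
      using valid_clockD(1)[OF cw, of t' t] \<delta> by auto
    then show False using w_gap L by linarith
  qed
qed

lemma card_overlap_le_3:
  assumes "valid_clock \<delta> (C w)" "valid_clock \<delta> (C u)" "\<delta> \<le> 1/3" "L > 0"
  shows "finite (overlap C s L u g w) \<and> card (overlap C s L u g w) \<le> 3"
proof (cases "overlap C s L u g w = {}")
  case False
  note close = overlap_le_two_apart[OF assms]
  then obtain k where k: "k \<in> overlap C s L u g w" using False by auto
  have fin: "finite (overlap C s L u g w)"
    by (rule finite_subset[of _ "{..k + 2}"]) (auto dest: close[OF k])
  define m where "m = Min (overlap C s L u g w)"
  have "m \<in> overlap C s L u g w" using fin False unfolding m_def by simp
  hence "overlap C s L u g w \<subseteq> {m..m + 2}"
    using fin close unfolding m_def by auto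
  hence "card (overlap C s L u g w) \<le> card {m..m + 2}" by (rule card_mono[rotated]) simp
  thus ?thesis using fin by simp
qed simp

lemma measure_PiM_pmf_cylinder:
  fixes P :: "'i \<Rightarrow> 'a pmf"
  assumes "finite J"
  shows "{\<omega> \<in> space (PiM UNIV (\<lambda>i. measure_pmf (P i))). \<forall>i\<in>J. \<omega> i \<in> X i}
           \<in> sets (PiM UNIV (\<lambda>i. measure_pmf (P i)))"
    and "measure (PiM UNIV (\<lambda>i. measure_pmf (P i)))
           {\<omega> \<in> space (PiM UNIV (\<lambda>i. measure_pmf (P i))). \<forall>i\<in>J. \<omega> i \<in> X i}
         = (\<Prod>i\<in>J. measure_pmf.prob (P i) (X i))"
proof -
  let ?E = "{\<omega> \<in> space (PiM UNIV (\<lambda>i. measure_pmf (P i))). \<forall>i\<in>J. \<omega> i \<in> X i}"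
  interpret product_prob_space "\<lambda>i. measure_pmf (P i)" UNIV
    by (intro product_prob_spaceI measure_pmf.prob_space_axioms)
  have emb: "?E = prod_emb UNIV (\<lambda>i. measure_pmf (P i)) J (PiE J X)"
    unfolding prod_emb_def by (auto simp: space_PiM Pi_iff)
  show "?E \<in> sets (PiM UNIV (\<lambda>i. measure_pmf (P i)))"
    unfolding emb by (rule sets_PiM_I) (auto simp: assms)
  show "measure (PiM UNIV (\<lambda>i. measure_pmf (P i))) ?E = (\<Prod>i\<in>J. measure_pmf.prob (P i) (X i))"
    unfolding emb by (rule measure_PiM_emb) (auto simp: assms)
qed

lemma rho_le_span_ratio:
  fixes nb :: "'n::finite \<Rightarrow> 'n \<Rightarrow> bool"
  assumes "nb v u"
  shows "rho nb A \<le> span_ratio A v u"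
proof -
  have "finite {span_ratio A x y |x y. nb x y}"
    by (rule finite_subset[of _ "case_prod (span_ratio A) ` UNIV"]) auto
  then show ?thesis unfolding rho_def by (rule Min_le) (use assms in auto)
qed

definition interferers ::
  "('n \<Rightarrow> 'n \<Rightarrow> bool) \<Rightarrow> ('n \<Rightarrow> 'c set) \<Rightarrow> ('n \<Rightarrow> real \<Rightarrow> real) \<Rightarrow> ('n \<Rightarrow> real) \<Rightarrow> real \<Rightarrow>
   'n \<Rightarrow> 'n \<Rightarrow> nat \<Rightarrow> 'c \<Rightarrow> ('n \<times> nat) set" where
  "interferers nb A C s L v u g c = (SIGMA w:{w. w \<noteq> v \<and> nb_on nb A u w c}. overlap C s L u g w)"

lemma covers_on_iff_interferers:
  "covers_on nb A C s L \<omega> v f u g c \<longleftrightarrow>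
     \<omega> (v, f) = (True, c) \<and> \<omega> (u, g) = (False, c) \<and>
     (\<forall>i \<in> interferers nb A C s L v u g c. \<omega> i \<noteq> (True, c))"
  unfolding covers_on_def interferers_def by auto

locale algorithm1 =
  fixes nb :: "'n::finite \<Rightarrow> 'n \<Rightarrow> bool" and A :: "'n \<Rightarrow> 'c set" and Dest :: nat
    and C :: "'n \<Rightarrow> real \<Rightarrow> real" and s :: "'n \<Rightarrow> real" and L \<delta> :: real
  assumes nb_sym: "nb x y \<longleftrightarrow> nb y x"
    and nb_irrefl: "\<not> nb x x"
    and finite_A: "finite (A x)"
    and A_nonempty: "A x \<noteq> {}"
    and Dest_pos: "Dest > 0"
    and maxdeg_le_Dest: "maxdeg nb A \<le> Dest"
    and valid_clocks: "valid_clock \<delta> (C x)"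
    and drift_le: "\<delta> \<le> 1/3"
    and L_pos: "L > 0"
begin

lemma card_A_pos: "0 < real (card (A x))"
  using finite_A A_nonempty by (simp add: card_gt_0_iff)

lemma p_tx_nonneg: "0 \<le> p_tx A Dest x"
  and p_tx_le_half: "p_tx A Dest x \<le> 1/2"
  unfolding p_tx_def using Dest_pos by auto

lemma p_tx_per_channel_le: "p_tx A Dest x / real (card (A x)) \<le> 1 / (3 * real Dest)"
proof -
  have "p_tx A Dest x \<le> real (card (A x)) / (3 * real Dest)" unfolding p_tx_def by simp
  then show ?thesis using card_A_pos[of x] by (simp add: divide_le_eq field_simps)
qed

lemma p_tx_per_channel_ge:
  "1 / max (2 * real (S_max A)) (3 * real Dest) \<le> p_tx A Dest x / real (card (A x))"
proof (cases "1/2 \<le> real (card (A x)) / (3 * real Dest)")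
  case True
  have "card (A x) \<le> S_max A" unfolding S_max_def by simp
  then have "2 * real (card (A x)) \<le> max (2 * real (S_max A)) (3 * real Dest)" by simp
  moreover have "p_tx A Dest x / real (card (A x)) = 1 / (2 * real (card (A x)))"
    using True unfolding p_tx_def by simp
  ultimately show ?thesis using card_A_pos[of x] by (simp add: frac_le)
next
  case False
  then have "p_tx A Dest x / real (card (A x)) = 1 / (3 * real Dest)"
    unfolding p_tx_def using card_A_pos[of x] by simp
  then show ?thesis using Dest_pos by (simp add: frac_le)
qed

lemma pmf_frame_pmf:
  assumes "c \<in> A x"
  shows "pmf (frame_pmf A Dest x) (b, c) =
           (if b then p_tx A Dest x else 1 - p_tx A Dest x) / real (card (A x))"
  using assms finite_A[of x] p_tx_nonneg[of x] p_tx_le_half[of x]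
  unfolding frame_pmf_def pmf_pair by (cases b) (auto simp: pmf_of_set[OF A_nonempty finite_A])

lemma deg_le_Dest:
  assumes "c \<in> A x"
  shows "deg nb A x c \<le> Dest"
proof -
  have "finite {deg nb A x c |x c. c \<in> A x}"
    by (rule finite_subset[of _ "case_prod (deg nb A) ` (SIGMA x:UNIV. A x)"])
       (use finite_A in auto)
  then have "deg nb A x c \<le> maxdeg nb A"
    unfolding maxdeg_def by (rule Max_ge) (use assms in blast)
  then show ?thesis using maxdeg_le_Dest by simp
qed

lemma finite_overlap: "finite (overlap C s L u g w)"
  and card_overlap: "card (overlap C s L u g w) \<le> 3"
  using card_overlap_le_3[of \<delta> C w u, OF valid_clocks valid_clocks drift_le L_pos] by auto

lemma finite_interferers: "finite (interferers nb A C s L v u g c)"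
  unfolding interferers_def using finite_overlap by auto

lemma card_interferers:
  assumes "nb v u" "c \<in> A u \<inter> A v"
  shows "card (interferers nb A C s L v u g c) \<le> 3 * (Dest - 1)"
proof -
  let ?W = "{w. w \<noteq> v \<and> nb_on nb A u w c}"
  have "v \<in> {w. nb_on nb A u w c}" using assms nb_sym unfolding nb_on_def by auto
  moreover have "?W = {w. nb_on nb A u w c} - {v}" by auto
  ultimately have "card ?W = deg nb A u c - 1" unfolding deg_def by simp
  then have W: "card ?W \<le> Dest - 1" using deg_le_Dest[of c u] assms by simp
  have "card (interferers nb A C s L v u g c) = (\<Sum>w\<in>?W. card (overlap C s L u g w))"
    unfolding interferers_def by (rule card_SigmaI) (use finite_overlap in auto)
  also have "\<dots> \<le> (\<Sum>w\<in>?W. 3)" by (rule sum_mono) (rule card_overlap)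
  finally show ?thesis using W by simp
qed

lemma prob_frame_compl:
  assumes "c \<in> A x"
  shows "measure_pmf.prob (frame_pmf A Dest x) (- {(True, c)})
           = 1 - p_tx A Dest x / real (card (A x))"
proof -
  have "measure_pmf.prob (frame_pmf A Dest x) (space (measure_pmf (frame_pmf A Dest x)) - {(True, c)})
          = 1 - pmf (frame_pmf A Dest x) (True, c)"
    by (subst measure_pmf.prob_compl) (auto simp: measure_pmf_single)
  then show ?thesis using pmf_frame_pmf[OF assms] by (simp add: Compl_eq_Diff_UNIV)
qed

lemma prob_covers_on:
  fixes v u :: 'n and f g :: nat and c :: 'c
  assumes "nb v u" "c \<in> A u \<inter> A v"
  defines "E \<equiv> {\<omega> \<in> space (alg_space A Dest). covers_on nb A C s L \<omega> v f u g c}"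
  shows "E \<in> sets (alg_space A Dest)"
    and "measure (alg_space A Dest) E =
           p_tx A Dest v / real (card (A v)) * ((1 - p_tx A Dest u) / real (card (A u)) *
           (\<Prod>i\<in>interferers nb A C s L v u g c. 1 - p_tx A Dest (fst i) / real (card (A (fst i)))))"
proof -
  let ?K = "interferers nb A C s L v u g c"
  let ?P = "\<lambda>i. frame_pmf A Dest (fst i)"
  define X where "X i = (if i = (v, f) then {(True, c)} else if i = (u, g) then {(False, c)}
                         else - {(True, c)})" for i
  have vu: "v \<noteq> u" using assms nb_irrefl by auto
  have notK: "(v, f) \<notin> ?K" "(u, g) \<notin> ?K"
    unfolding interferers_def nb_on_def using nb_irrefl by auto
  have c_K: "c \<in> A (fst i)" if "i \<in> ?K" for i
    using that unfolding interferers_def nb_on_def by auto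
  have E: "E = {\<omega> \<in> space (PiM UNIV (\<lambda>i. measure_pmf (?P i))).
                  \<forall>i\<in>insert (v, f) (insert (u, g) ?K). \<omega> i \<in> X i}"
    unfolding E_def alg_space_def covers_on_iff_interferers X_def using vu notK by auto
  have fin: "finite (insert (v, f) (insert (u, g) ?K))" using finite_interferers by simp
  show "E \<in> sets (alg_space A Dest)"
    unfolding E alg_space_def using measure_PiM_pmf_cylinder(1)[OF fin] .
  have "measure (alg_space A Dest) E = (\<Prod>i\<in>insert (v, f) (insert (u, g) ?K). measure_pmf.prob (?P i) (X i))"
    unfolding E alg_space_def using measure_PiM_pmf_cylinder(2)[OF fin] .
  also have "\<dots> = measure_pmf.prob (?P (v, f)) (X (v, f)) * (measure_pmf.prob (?P (u, g)) (X (u, g)) *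
                   (\<Prod>i\<in>?K. measure_pmf.prob (?P i) (X i)))"
    using finite_interferers notK vu by simp
  also have "(\<Prod>i\<in>?K. measure_pmf.prob (?P i) (X i))
               = (\<Prod>i\<in>?K. 1 - p_tx A Dest (fst i) / real (card (A (fst i))))"
    using notK by (intro prod.cong) (auto simp: X_def prob_frame_compl[OF c_K])
  also have "measure_pmf.prob (?P (v, f)) (X (v, f)) = p_tx A Dest v / real (card (A v))"
    using assms by (simp add: X_def measure_pmf_single pmf_frame_pmf)
  also have "measure_pmf.prob (?P (u, g)) (X (u, g)) = (1 - p_tx A Dest u) / real (card (A u))"
    using assms vu by (simp add: X_def measure_pmf_single pmf_frame_pmf)
  finally show "measure (alg_space A Dest) E =
           p_tx A Dest v / real (card (A v)) * ((1 - p_tx A Dest u) / real (card (A u)) *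
           (\<Prod>i\<in>?K. 1 - p_tx A Dest (fst i) / real (card (A (fst i)))))" .
qed

lemma prob_covers_on_ge:
  assumes "nb v u" "c \<in> A u \<inter> A v"
  shows "1 / (8 * max (2 * real (S_max A)) (3 * real Dest) * real (card (A u)))
           \<le> measure (alg_space A Dest) {\<omega> \<in> space (alg_space A Dest). covers_on nb A C s L \<omega> v f u g c}"
proof -
  let ?M = "max (2 * real (S_max A)) (3 * real Dest)"
  let ?K = "interferers nb A C s L v u g c"
  have M_pos: "0 < ?M" using Dest_pos by simp
  have rx: "1 / (2 * real (card (A u))) \<le> (1 - p_tx A Dest u) / real (card (A u))"
    using p_tx_le_half[of u] card_A_pos[of u] by (simp add: field_simps)
  have silent: "1 / 4 \<le> (\<Prod>i\<in>?K. 1 - p_tx A Dest (fst i) / real (card (A (fst i))))"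
  proof -
    define q where "q = 1 - 1 / (3 * real Dest)"
    have q: "0 \<le> q" "q \<le> 1" using Dest_pos unfolding q_def by (auto simp: field_simps)
    have "1 / 4 \<le> q ^ (3 * (Dest - 1))"
      unfolding q_def by (rule quarter_le_power_one_minus_inverse[OF Dest_pos])
    also have "\<dots> \<le> q ^ card ?K"
      using card_interferers[OF assms] q by (intro power_decreasing) auto
    also have "\<dots> = (\<Prod>i\<in>?K. q)" by simp
    also have "\<dots> \<le> (\<Prod>i\<in>?K. 1 - p_tx A Dest (fst i) / real (card (A (fst i))))"
      using q p_tx_per_channel_le unfolding q_def by (intro prod_mono) (auto simp: algebra_simps)
    finally show ?thesis .
  qed
  have "1 / (8 * ?M * real (card (A u))) = 1 / ?M * (1 / (2 * real (card (A u))) * (1 / 4))"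
    by simp
  also have "\<dots> \<le> p_tx A Dest v / real (card (A v)) * ((1 - p_tx A Dest u) / real (card (A u)) *
                   (\<Prod>i\<in>?K. 1 - p_tx A Dest (fst i) / real (card (A (fst i)))))"
    using p_tx_per_channel_ge rx silent M_pos card_A_pos[of u] p_tx_nonneg[of v] p_tx_le_half[of u]
    by (intro mult_mono) auto
  also have "\<dots> = measure (alg_space A Dest) {\<omega> \<in> space (alg_space A Dest). covers_on nb A C s L \<omega> v f u g c}"
    using prob_covers_on(2)[OF assms] by simp
  finally show ?thesis .
qed

lemma prob_covers_eq_sum:
  assumes "nb v u"
  shows "measure (alg_space A Dest) {\<omega> \<in> space (alg_space A Dest). covers nb A C s L \<omega> v f u g}
           = (\<Sum>c\<in>A u \<inter> A v. measure (alg_space A Dest)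
                 {\<omega> \<in> space (alg_space A Dest). covers_on nb A C s L \<omega> v f u g c})"
proof -
  interpret prob_space "alg_space A Dest"
    unfolding alg_space_def by (intro prob_space_PiM measure_pmf.prob_space_axioms)
  have "{\<omega> \<in> space (alg_space A Dest). covers nb A C s L \<omega> v f u g}
          = (\<Union>c\<in>A u \<inter> A v. {\<omega> \<in> space (alg_space A Dest). covers_on nb A C s L \<omega> v f u g c})"
    unfolding covers_def by auto
  moreover have "disjoint_family_on
      (\<lambda>c. {\<omega> \<in> space (alg_space A Dest). covers_on nb A C s L \<omega> v f u g c}) (A u \<inter> A v)"
    unfolding disjoint_family_on_def covers_on_def by auto
  ultimately show ?thesis
    using prob_covers_on(1)[OF assms] finite_A[of u]
    by (simp add: finite_measure_finite_Union subset_eq)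
qed

theorem prob_covers_ge:
  assumes "nb v u"
  shows "rho nb A / (8 * max (2 * real (S_max A)) (3 * real Dest))
           \<le> measure (alg_space A Dest) {\<omega> \<in> space (alg_space A Dest). covers nb A C s L \<omega> v f u g}"
proof -
  let ?M = "max (2 * real (S_max A)) (3 * real Dest)"
  have "rho nb A / (8 * ?M) \<le> span_ratio A v u / (8 * ?M)"
    using rho_le_span_ratio[where nb = nb and v = v and u = u and A = A, OF assms] Dest_pos by (simp add: divide_right_mono)
  also have "\<dots> = (\<Sum>c\<in>A u \<inter> A v. 1 / (8 * ?M * real (card (A u))))"
    unfolding span_ratio_def by simp
  also have "\<dots> \<le> (\<Sum>c\<in>A u \<inter> A v. measure (alg_space A Dest)
                     {\<omega> \<in> space (alg_space A Dest). covers_on nb A C s L \<omega> v f u g c})"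
    using prob_covers_on_ge[OF assms] by (rule sum_mono)
  also have "\<dots> = measure (alg_space A Dest) {\<omega> \<in> space (alg_space A Dest). covers nb A C s L \<omega> v f u g}"
    using prob_covers_eq_sum[OF assms] by simp
  finally show ?thesis .
qed

end

theorem mainTheorem2:
  fixes nb :: "'n::finite \<Rightarrow> 'n \<Rightarrow> bool" and A :: "'n \<Rightarrow> 'c set"
    and Dest :: nat and C :: "'n \<Rightarrow> real \<Rightarrow> real" and s :: "'n \<Rightarrow> real"
    and L \<delta> :: real and v u :: 'n and f g :: nat
  assumes sym: "\<forall>x y. nb x y \<longleftrightarrow> nb y x"
    and irrefl: "\<forall>x. \<not> nb x x"
    and chans: "\<forall>x. finite (A x) \<and> A x \<noteq> {}"
    and Dest_pos: "Dest > 0"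
    and Dest_ge: "maxdeg nb A \<le> Dest"
    and delta: "\<delta> \<le> 1/7"
    and clocks: "\<forall>x. valid_clock \<delta> (C x)"
    and L_pos: "L > 0"
    and link: "nb v u"
    and al: "aligned C s L v f u g"
  shows "measure (alg_space A Dest) {\<omega> \<in> space (alg_space A Dest). covers nb A C s L \<omega> v f u g}
           \<ge> rho nb A / (8 * max (2 * real (S_max A)) (3 * real Dest))"
proof -
  interpret algorithm1 nb A Dest C s L \<delta>
    using sym irrefl chans Dest_pos Dest_ge clocks delta L_pos by unfold_locales auto
  show ?thesis using prob_covers_ge[OF link] by simp
qed

end
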